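(* Let $h\ge r$ be positive integers and let $0<\beta<1$ be a real. There is a positive real $\alpha$ depending on $h,r,\beta$ such that the following holds. Let $G$ be any graph on $n$ vertices and let $p=p_r(G)$. For $i,j\in[h]$ let $\mathcal{A}_{i,j}$ denote the set of $i$-good sequences of length $j$ relative to $(\alpha,\beta,h,r)$ in $V(G)$. Then for each $i\in[h]$ and $r\le j\le h$, \[\sum_{S\in\mathcal{A}_{i,j}}|N(S)|^r\geq (1-\beta)\,n^{j+r}p^{jr}.\] In particular, there exists an $i$-good sequence $S$ of length $j$ such that $|N(S)|\ge(1-\beta)^{1/r}p^j n$.
   Context: All graphs are finite and simple. For a positive integer $r$, $p_r(G)=t_{K_{1,r}}(G)^{1/r}=\frac1n\left(\frac1n\sum_{v\in V(G)}d(v)^r\right)^{1/r}$ where $n=|G|$. A sequence in a set $W$ is a finite sequence of elements of $W$ (repetitions allowed); its length $|S|$ counts multiplicity; $W^k$ denotes the set of sequences of length $k$ in $W$. For a sequence $S$ in $V(G)$, $N(S)$ is the set of vertices adjacent to every vertex of $S$. Goodness: fix reals $0<\alpha,\beta<1$ and positive integers $h,r$, and let $p=p_r(G)$. A sequence $T$ in $V(G)$ is $0$-good if $|N(T)|\ge\alpha p^{|T|}n$. For $1\le i\le h$, a sequence $S$ in $V(G)$ of length at most $h$ is $i$-good if $S$ is $0$-good and for each $|S|\le k\le h$, the number of $(i-1)$-good sequences in $N(S)^k$ is at least $(1-\beta)|N(S)|^k$. These are called $i$-good relative to $(\alpha,\beta,h,r)$. *)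

theory Defs
  imports Complex_Main
begin

definition simple_graph :: "'a set \<Rightarrow> ('a \<Rightarrow> 'a \<Rightarrow> bool) \<Rightarrow> bool" where
  "simple_graph V E \<longleftrightarrow> finite V \<and> (\<forall>x y. E x y \<longrightarrow> E y x) \<and> (\<forall>x. \<not> E x x)
     \<and> (\<forall>x y. E x y \<longrightarrow> x \<in> V \<and> y \<in> V)"

definition degree :: "'a set \<Rightarrow> ('a \<Rightarrow> 'a \<Rightarrow> bool) \<Rightarrow> 'a \<Rightarrow> nat" where
  "degree V E v = card {u \<in> V. E v u}"

definition p_r :: "nat \<Rightarrow> 'a set \<Rightarrow> ('a \<Rightarrow> 'a \<Rightarrow> bool) \<Rightarrow> real" where
  "p_r r V E = (1 / real (card V)) *
     ((1 / real (card V)) * (\<Sum>v\<in>V. real (degree V E v) ^ r)) powr (1 / real r)"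

definition nbhd :: "'a set \<Rightarrow> ('a \<Rightarrow> 'a \<Rightarrow> bool) \<Rightarrow> 'a list \<Rightarrow> 'a set" where
  "nbhd V E S = {v \<in> V. \<forall>u \<in> set S. E u v}"

definition seqs :: "'a set \<Rightarrow> nat \<Rightarrow> 'a list set" where
  "seqs W k = {xs. set xs \<subseteq> W \<and> length xs = k}"

fun good :: "real \<Rightarrow> real \<Rightarrow> nat \<Rightarrow> nat \<Rightarrow> 'a set \<Rightarrow> ('a \<Rightarrow> 'a \<Rightarrow> bool) \<Rightarrow> nat \<Rightarrow> 'a list \<Rightarrow> bool" where
  "good \<alpha> \<beta> h r V E 0 T =
     (real (card (nbhd V E T)) \<ge> \<alpha> * p_r r V E ^ length T * real (card V))"
| "good \<alpha> \<beta> h r V E (Suc i) S =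
     (length S \<le> h \<and> good \<alpha> \<beta> h r V E 0 S \<and>
      (\<forall>k. length S \<le> k \<and> k \<le> h \<longrightarrow>
         real (card {T \<in> seqs (nbhd V E S) k. good \<alpha> \<beta> h r V E i T})
           \<ge> (1 - \<beta>) * real (card (nbhd V E S)) ^ k))"

definition goodset :: "real \<Rightarrow> real \<Rightarrow> nat \<Rightarrow> nat \<Rightarrow> 'a set \<Rightarrow> ('a \<Rightarrow> 'a \<Rightarrow> bool) \<Rightarrow> nat \<Rightarrow> nat \<Rightarrow> 'a list set" where
  "goodset \<alpha> \<beta> h r V E i j = {S \<in> seqs V j. good \<alpha> \<beta> h r V E i S}"

end

theory Submission
  imports Defs "HOL-Analysis.Convex"
begin

(* Summing |N(S)|^s over S in V^j counts homomorphisms of K_{j,s}, so the sum is symmetric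
   in j and s. Hence the sum of |N(T)| over T in V^r is sum_v d(v)^r = n^(r+1) p^r, and the
   power-mean inequality for the j-th powers of the |N(T)| gives
   sum over V^j of |N(S)|^r >= n^(j+r) p^(jr). It remains to show that, for
   alpha small enough, the sequences that are not h-good carry at most a beta-fraction of this.
   This goes by induction on i, for all exponents s <= j at once: a sequence S that is not
   (i+1)-good either has |N(S)| <= delta p^j n, or it is 0-good and, for some k, more than a
   beta-fraction of N(S)^k is not i-good. In the second case |N(S)|^s is charged to these bad
   extensions; double counting turns their total into the weight of the non-i-good sequences of
   length k with exponent j, which is small by induction. *)

lemma convex_on_power_nonneg: "convex_on {0::real..} (\<lambda>x. x ^ n)"
proof (cases "even n")
  case True
  then show ?thesis
    using convex_on_subset[OF convex_power_even[OF True]] by blast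
qed (rule convex_power_odd)

lemma power_sum_le_card_power_sum:
  fixes f :: "'b \<Rightarrow> real"
  assumes "finite A" and "\<And>x. x \<in> A \<Longrightarrow> 0 \<le> f x"
  shows "(\<Sum>x\<in>A. f x) ^ Suc m \<le> real (card A) ^ m * (\<Sum>x\<in>A. f x ^ Suc m)"
proof (cases "A = {}")
  case False
  define N where "N = real (card A)"
  have N: "0 < N" using assms(1) False by (simp add: N_def card_gt_0_iff)
  have "(\<Sum>x\<in>A. (1 / N) *\<^sub>R f x) ^ Suc m \<le> (\<Sum>x\<in>A. 1 / N * f x ^ Suc m)"
    by (rule convex_on_sum[OF assms(1) False convex_on_power_nonneg]) (use N assms(2) in \<open>auto simp: N_def\<close>)
  then have "(\<Sum>x\<in>A. f x) ^ Suc m / N ^ Suc m \<le> (\<Sum>x\<in>A. f x ^ Suc m) / N"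
    by (simp add: sum_divide_distrib[symmetric] power_divide)
  then show ?thesis
    using N by (simp add: N_def[symmetric] field_simps)
qed simp

lemma powr_inverse_power: "0 \<le> (x::real) \<Longrightarrow> 0 < n \<Longrightarrow> (x powr (1 / real n)) ^ n = x"
  by (simp flip: root_powr_inverse)

lemma exists_ge_of_card_mult_le_sum:
  fixes f :: "'b \<Rightarrow> real"
  assumes "finite A" and "A \<noteq> {}" and "real (card A) * c \<le> (\<Sum>x\<in>A. f x)"
  shows "\<exists>x\<in>A. c \<le> f x"
proof (rule ccontr)
  assume "\<not> (\<exists>x\<in>A. c \<le> f x)"
  then have "(\<Sum>x\<in>A. f x) < real (card A) * c"
    using assms(1,2) by (intro sum_bounded_above_strict) (auto simp: card_gt_0_iff)
  with assms(3) show False by simp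
qed

lemma finite_seqs: "finite W \<Longrightarrow> finite (seqs W k)"
  unfolding seqs_def by (rule finite_lists_length_eq)

lemma card_seqs: "finite W \<Longrightarrow> card (seqs W k) = card W ^ k"
  unfolding seqs_def by (rule card_lists_length_eq)

lemma card_le_if_subset_seqs: "finite V \<Longrightarrow> A \<subseteq> seqs V j \<Longrightarrow> real (card A) \<le> real (card V) ^ j"
  by (metis card_mono card_seqs finite_seqs of_nat_le_iff of_nat_power)

lemma seqs_mono: "W \<subseteq> W' \<Longrightarrow> seqs W k \<subseteq> seqs W' k"
  unfolding seqs_def by auto

lemma seqs_Suc_0: "seqs W (Suc 0) = (\<lambda>v. [v]) ` W"
  unfolding seqs_def by (auto simp: length_Suc_conv)

lemma simple_graph_finite: "simple_graph V E \<Longrightarrow> finite V"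
  unfolding simple_graph_def by blast

lemma nbhd_subset: "nbhd V E S \<subseteq> V"
  unfolding nbhd_def by blast

lemma finite_nbhd: "simple_graph V E \<Longrightarrow> finite (nbhd V E S)"
  by (meson finite_subset nbhd_subset simple_graph_finite)

lemma card_nbhd_singleton: "card (nbhd V E [v]) = degree V E v"
  unfolding nbhd_def degree_def by simp

lemma p_r_nonneg: "0 \<le> p_r r V E"
  unfolding p_r_def by (simp add: sum_nonneg)

lemma card_pos_if_p_r_pos: "0 < p_r r V E \<Longrightarrow> 0 < card V"
  unfolding p_r_def by (cases "card V = 0") auto

lemma sum_degree_power:
  assumes "0 < card V" and "0 < r"
  shows "(\<Sum>v\<in>V. real (degree V E v) ^ r) = real (card V) ^ (r + 1) * p_r r V E ^ r"
proof -
  define n where "n = real (card V)"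
  define Y where "Y = (\<Sum>v\<in>V. real (degree V E v) ^ r) / n"
  have "0 < n" and "0 \<le> Y"
    using assms(1) by (simp_all add: n_def Y_def sum_nonneg)
  have "p_r r V E ^ r = (Y powr (1 / real r)) ^ r / n ^ r"
    unfolding p_r_def Y_def n_def by (simp add: power_divide)
  also have "\<dots> = Y / n ^ r"
    using assms(2) \<open>0 \<le> Y\<close> by (simp add: powr_inverse_power)
  finally show ?thesis
    using \<open>0 < n\<close> by (simp add: Y_def n_def[symmetric] field_simps)
qed

lemma seqs_nbhd_swap:
  assumes "simple_graph V E" and "S \<in> seqs V j" and "T \<in> seqs V k"
  shows "T \<in> seqs (nbhd V E S) k \<longleftrightarrow> S \<in> seqs (nbhd V E T) j"
  using assms unfolding simple_graph_def seqs_def nbhd_def by blast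

lemma sum_card_seqs_nbhd_Int:
  assumes G: "simple_graph V E" and B: "B \<subseteq> seqs V k"
  shows "(\<Sum>S\<in>seqs V j. real (card (seqs (nbhd V E S) k \<inter> B)))
       = (\<Sum>T\<in>B. real (card (nbhd V E T)) ^ j)"
proof -
  have fin: "finite (seqs V j)" "finite B"
    using finite_seqs[OF simple_graph_finite[OF G]] B by (auto intro: finite_subset)
  have "(\<Sum>S\<in>seqs V j. real (card (seqs (nbhd V E S) k \<inter> B)))
      = (\<Sum>S\<in>seqs V j. \<Sum>T\<in>B. of_bool (T \<in> seqs (nbhd V E S) k))"
    using fin(2) by (simp add: Int_commute)
  also have "\<dots> = (\<Sum>S\<in>seqs V j. \<Sum>T\<in>B. of_bool (S \<in> seqs (nbhd V E T) j))"
  proof (intro sum.cong refl)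
    fix S T
    assume "S \<in> seqs V j" and "T \<in> B"
    then have "T \<in> seqs (nbhd V E S) k \<longleftrightarrow> S \<in> seqs (nbhd V E T) j"
      using seqs_nbhd_swap[OF G] B by blast
    then show "(of_bool (T \<in> seqs (nbhd V E S) k) :: real) = of_bool (S \<in> seqs (nbhd V E T) j)"
      by simp
  qed
  also have "\<dots> = (\<Sum>T\<in>B. real (card (seqs V j \<inter> seqs (nbhd V E T) j)))"
    using fin(1) by (subst sum.swap) simp
  also have "\<dots> = (\<Sum>T\<in>B. real (card (nbhd V E T)) ^ j)"
  proof (rule sum.cong[OF refl])
    fix T
    have "seqs V j \<inter> seqs (nbhd V E T) j = seqs (nbhd V E T) j"
      by (rule Int_absorb1[OF seqs_mono[OF nbhd_subset]])
    then show "real (card (seqs V j \<inter> seqs (nbhd V E T) j)) = real (card (nbhd V E T)) ^ j"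
      by (simp add: card_seqs finite_nbhd[OF G])
  qed
  finally show ?thesis .
qed

lemma sum_card_nbhd_power_swap:
  assumes G: "simple_graph V E"
  shows "(\<Sum>S\<in>seqs V j. real (card (nbhd V E S)) ^ k) = (\<Sum>T\<in>seqs V k. real (card (nbhd V E T)) ^ j)"
proof -
  have "real (card (seqs (nbhd V E S) k \<inter> seqs V k)) = real (card (nbhd V E S)) ^ k" for S
    by (simp add: Int_absorb2 seqs_mono nbhd_subset card_seqs finite_nbhd[OF G])
  then show ?thesis
    using sum_card_seqs_nbhd_Int[OF G order_refl, of k j] by simp
qed

lemma sum_card_nbhd_seqs_eq_sum_degree_power:
  assumes "simple_graph V E"
  shows "(\<Sum>T\<in>seqs V r. real (card (nbhd V E T))) = (\<Sum>v\<in>V. real (degree V E v) ^ r)"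
proof -
  have "(\<Sum>v\<in>V. real (degree V E v) ^ r) = (\<Sum>S\<in>seqs V (Suc 0). real (card (nbhd V E S)) ^ r)"
    by (simp add: seqs_Suc_0 sum.reindex inj_on_def card_nbhd_singleton)
  then show ?thesis
    using sum_card_nbhd_power_swap[OF assms, of "Suc 0" r] by simp
qed

lemma sum_card_nbhd_power_ge:
  assumes G: "simple_graph V E" and "0 < r" and "0 < j"
  shows "real (card V) ^ (j + r) * p_r r V E ^ (j * r) \<le> (\<Sum>S\<in>seqs V j. real (card (nbhd V E S)) ^ r)"
proof (cases "card V = 0")
  case True
  then have "p_r r V E = 0"
    unfolding p_r_def by simp
  then show ?thesis
    using assms by (simp add: sum_nonneg power_0_left)
next
  case False
  define n where "n = real (card V)"
  let ?p = "p_r r V E"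
  have "0 < n"
    using False by (simp add: n_def)
  obtain m where m: "j = Suc m"
    using \<open>0 < j\<close> gr0_implies_Suc by blast
  have "(\<Sum>T\<in>seqs V r. real (card (nbhd V E T))) = n ^ (r + 1) * ?p ^ r"
    using False \<open>0 < r\<close> by (simp add: sum_card_nbhd_seqs_eq_sum_degree_power[OF G] sum_degree_power n_def)
  then have "(n ^ (r + 1) * ?p ^ r) ^ j \<le> (n ^ r) ^ m * (\<Sum>T\<in>seqs V r. real (card (nbhd V E T)) ^ j)"
    using power_sum_le_card_power_sum[of "seqs V r" "\<lambda>T. real (card (nbhd V E T))" m]
    by (simp add: m finite_seqs card_seqs simple_graph_finite[OF G] n_def)
  also have "(n ^ (r + 1) * ?p ^ r) ^ j = (n ^ r) ^ m * (n ^ (j + r) * ?p ^ (j * r))"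
    by (simp add: m power_mult_distrib power_add ac_simps flip: power_mult)
  finally show ?thesis
    using \<open>0 < n\<close> sum_card_nbhd_power_swap[OF G, of r j] by (simp add: n_def)
qed

(* An alpha for which the non-i-good sequences carry at most an eta-fraction of the weight
   (bad_moment_le): delta absorbs the sequences with small neighbourhood, and level i is run with
   the accuracy that makes the charge to bad extensions at most eta / 2. *)
fun good_threshold :: "real \<Rightarrow> nat \<Rightarrow> nat \<Rightarrow> real \<Rightarrow> real" where
  "good_threshold \<beta> h 0 \<eta> = min \<eta> 1"
| "good_threshold \<beta> h (Suc i) \<eta> =
     (let \<delta> = min (\<eta> / 2) 1 in min \<delta> (good_threshold \<beta> h i (\<eta> * \<beta> * \<delta> ^ h / (2 * real (h + 1)))))"

lemma good_threshold_pos: "0 < \<beta> \<Longrightarrow> 0 < \<eta> \<Longrightarrow> 0 < good_threshold \<beta> h i \<eta>"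
  by (induction i arbitrary: \<eta>) (simp_all add: Let_def)

lemma good_threshold_le: "0 \<le> \<eta> \<Longrightarrow> good_threshold \<beta> h i \<eta> \<le> min \<eta> 1"
  by (cases i) (auto simp: Let_def)

declare good.simps(2) [simp del]

locale good_sequences =
  fixes V :: "'a set" and E :: "'a \<Rightarrow> 'a \<Rightarrow> bool" and \<alpha> \<beta> :: real and h r :: nat
  assumes graph: "simple_graph V E"
    and alpha_pos: "0 < \<alpha>" and alpha_le_1: "\<alpha> \<le> 1" and beta_pos: "0 < \<beta>"
begin

abbreviation nbhd_size :: "'a list \<Rightarrow> real" where
  "nbhd_size S \<equiv> real (card (nbhd V E S))"

abbreviation moment :: "'a list set \<Rightarrow> nat \<Rightarrow> real" where
  "moment A s \<equiv> \<Sum>S\<in>A. nbhd_size S ^ s"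

abbreviation bad :: "nat \<Rightarrow> nat \<Rightarrow> 'a list set" where
  "bad i j \<equiv> seqs V j - goodset \<alpha> \<beta> h r V E i j"

(* The number of homomorphisms K_{j,s} -> G is moment (seqs V j) s; biclique_bound j s is its
   expected value in G(n, p). *)
abbreviation biclique_bound :: "nat \<Rightarrow> nat \<Rightarrow> real" where
  "biclique_bound j s \<equiv> real (card V) ^ (j + s) * p_r r V E ^ (j * s)"

lemma biclique_bound_nonneg: "0 \<le> biclique_bound j s"
  by (simp add: p_r_nonneg)

lemma biclique_bound_shift:
  assumes "s \<le> k"
  shows "biclique_bound k j = (p_r r V E ^ j * real (card V)) ^ (k - s) * biclique_bound j s"
proof -
  obtain t where "k = s + t"
    using assms le_Suc_ex by blast
  then show ?thesis
    by (simp add: power_mult_distrib power_add ac_simps distrib_left flip: power_mult)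
qed

lemma finite_bad: "finite (bad i j)"
  using finite_seqs[OF simple_graph_finite[OF graph]] by (rule finite_Diff)

lemma good_Suc_imp_good: "good \<alpha> \<beta> h r V E (Suc i) S \<Longrightarrow> good \<alpha> \<beta> h r V E i S"
proof (induction i arbitrary: S)
  case (Suc i)
  have "real (card {T \<in> seqs (nbhd V E S) k. good \<alpha> \<beta> h r V E (Suc i) T})
      \<le> real (card {T \<in> seqs (nbhd V E S) k. good \<alpha> \<beta> h r V E i T})" for k
    using Suc.IH
    by (intro of_nat_mono card_mono) (auto intro: finite_subset[OF _ finite_seqs[OF finite_nbhd[OF graph]]])
  with Suc.prems show ?case
    unfolding good.simps(2)[where i = "Suc i"] good.simps(2)[where i = i] by (meson order_trans)
qed (simp add: good.simps)

lemma good_antimono: "i \<le> i' \<Longrightarrow> good \<alpha> \<beta> h r V E i' S \<Longrightarrow> good \<alpha> \<beta> h r V E i S"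
  by (induction i' rule: dec_induct) (blast dest: good_Suc_imp_good)+

lemma good_if_p_r_eq_0:
  assumes "p_r r V E = 0" and "length S \<le> h"
  shows "good \<alpha> \<beta> h r V E i S"
proof -
  have good_0: "good \<alpha> \<beta> h r V E 0 T" for T
  proof (cases T)
    case Nil
    then show ?thesis
      using alpha_pos alpha_le_1 by (simp add: nbhd_def mult_left_le_one_le)
  qed (simp add: assms(1))
  show ?thesis
    using assms(2)
  proof (induction i arbitrary: S)
    case (Suc i)
    have "{T \<in> seqs (nbhd V E S) k. good \<alpha> \<beta> h r V E i T} = seqs (nbhd V E S) k" if "k \<le> h" for k
      using Suc.IH that by (auto simp: seqs_def)
    then show ?case
      using Suc.prems good_0 beta_pos
      by (simp add: good.simps(2) card_seqs finite_nbhd[OF graph] algebra_simps)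
  qed (rule good_0)
qed

lemma many_bad_extensions:
  assumes "length S \<le> h" and "good \<alpha> \<beta> h r V E 0 S" and "\<not> good \<alpha> \<beta> h r V E (Suc i) S"
  obtains k where "length S \<le> k" and "k \<le> h"
    and "\<beta> * nbhd_size S ^ k < real (card (seqs (nbhd V E S) k \<inter> bad i k))"
proof -
  let ?good = "\<lambda>k. {T \<in> seqs (nbhd V E S) k. good \<alpha> \<beta> h r V E i T}"
  obtain k where k: "length S \<le> k" "k \<le> h" and few_good: "real (card (?good k)) < (1 - \<beta>) * nbhd_size S ^ k"
    using assms by (auto simp: good.simps(2) not_le)
  have fin: "finite (seqs (nbhd V E S) k)"
    by (rule finite_seqs[OF finite_nbhd[OF graph]])
  have "seqs (nbhd V E S) k \<inter> bad i k = seqs (nbhd V E S) k - ?good k"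
    using seqs_mono[OF nbhd_subset, of V E S k] by (auto simp: goodset_def)
  moreover have "card (?good k) \<le> card (seqs (nbhd V E S) k)"
    using fin by (intro card_mono) auto
  ultimately have "real (card (seqs (nbhd V E S) k \<inter> bad i k)) = nbhd_size S ^ k - real (card (?good k))"
    using fin by (simp add: card_Diff_subset card_seqs finite_nbhd[OF graph] of_nat_diff)
  with few_good k that show ?thesis
    by (simp add: algebra_simps)
qed

lemma bad_0_moment_le:
  assumes "1 \<le> s"
  shows "moment (bad 0 j) s \<le> \<alpha> * biclique_bound j s"
proof -
  define X where "X = p_r r V E ^ j * real (card V)"
  have "0 \<le> X"
    by (simp add: X_def p_r_nonneg)
  have "nbhd_size S ^ s \<le> \<alpha> * X ^ s" if "S \<in> bad 0 j" for S
  proof -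
    have "nbhd_size S \<le> \<alpha> * X"
      using that by (auto simp: goodset_def seqs_def X_def mult.assoc)
    then have "nbhd_size S ^ s \<le> \<alpha> ^ s * X ^ s"
      by (metis of_nat_0_le_iff power_mono power_mult_distrib)
    also have "\<dots> \<le> \<alpha> * X ^ s"
      using power_decreasing[OF assms, of \<alpha>] alpha_pos alpha_le_1 \<open>0 \<le> X\<close> by (simp add: mult_right_mono)
    finally show ?thesis .
  qed
  then have "moment (bad 0 j) s \<le> real (card (bad 0 j)) * (\<alpha> * X ^ s)"
    by (rule sum_bounded_above)
  also have "\<dots> \<le> real (card V) ^ j * (\<alpha> * X ^ s)"
    using alpha_pos \<open>0 \<le> X\<close> simple_graph_finite[OF graph]
    by (intro mult_right_mono card_le_if_subset_seqs) auto
  also have "\<dots> = \<alpha> * biclique_bound j s"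
    by (simp add: X_def power_mult_distrib power_add ac_simps flip: power_mult)
  finally show ?thesis .
qed

(* If |N(S)| > c then S is 0-good, and the k supplied by many_bad_extensions gives
   |N(S)|^s <= |N(S)|^k / c^(k-s) < (number of bad extensions) / (beta c^(k-s)). *)
lemma nbhd_size_power_le_if_bad_Suc:
  assumes S: "S \<in> bad (Suc i) j" and "j \<le> h" and "s \<le> j" and "0 < c"
    and c: "\<alpha> * p_r r V E ^ j * real (card V) \<le> c"
  shows "nbhd_size S ^ s
    \<le> c ^ s + (\<Sum>k=j..h. real (card (seqs (nbhd V E S) k \<inter> bad i k)) / (\<beta> * c ^ (k - s)))"
    (is "_ \<le> c ^ s + ?extensions")
proof (cases "nbhd_size S \<le> c")
  case True
  then have "nbhd_size S ^ s \<le> c ^ s"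
    by (intro power_mono) auto
  moreover have "0 \<le> ?extensions"
    using beta_pos \<open>0 < c\<close> by (intro sum_nonneg) auto
  ultimately show ?thesis
    by linarith
next
  case False
  have len: "length S = j"
    using S by (simp add: seqs_def)
  have "good \<alpha> \<beta> h r V E 0 S"
    using False c len by simp
  moreover have "\<not> good \<alpha> \<beta> h r V E (Suc i) S"
    using S by (simp add: goodset_def)
  ultimately obtain k where k: "j \<le> k" "k \<le> h"
    and many: "\<beta> * nbhd_size S ^ k < real (card (seqs (nbhd V E S) k \<inter> bad i k))"
    using many_bad_extensions len \<open>j \<le> h\<close> by metis
  have "nbhd_size S ^ s * c ^ (k - s) \<le> nbhd_size S ^ s * nbhd_size S ^ (k - s)"
    using False \<open>0 < c\<close> by (intro mult_left_mono power_mono) auto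
  also have "\<dots> = nbhd_size S ^ k"
    using k \<open>s \<le> j\<close> by (simp flip: power_add)
  finally have "nbhd_size S ^ s * (\<beta> * c ^ (k - s)) \<le> \<beta> * nbhd_size S ^ k"
    using beta_pos by (simp add: mult.left_commute[of _ \<beta>] mult_left_mono)
  with many have "nbhd_size S ^ s * (\<beta> * c ^ (k - s)) < real (card (seqs (nbhd V E S) k \<inter> bad i k))"
    by linarith
  then have "nbhd_size S ^ s < real (card (seqs (nbhd V E S) k \<inter> bad i k)) / (\<beta> * c ^ (k - s))"
    using beta_pos \<open>0 < c\<close> by (simp add: pos_less_divide_eq)
  also have "\<dots> \<le> ?extensions"
    using k beta_pos \<open>0 < c\<close> by (intro member_le_sum) auto
  finally show ?thesis
    using zero_le_power[of c s] \<open>0 < c\<close> by linarith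
qed

lemma bad_Suc_moment_le_extensions:
  assumes "j \<le> h" and "s \<le> j" and "0 < c" and "\<alpha> * p_r r V E ^ j * real (card V) \<le> c"
  shows "moment (bad (Suc i) j) s
    \<le> real (card V) ^ j * c ^ s + (\<Sum>k=j..h. moment (bad i k) j / (\<beta> * c ^ (k - s)))"
proof -
  let ?extensions = "\<lambda>k S. real (card (seqs (nbhd V E S) k \<inter> bad i k))"
  have "moment (bad (Suc i) j) s \<le> (\<Sum>S\<in>bad (Suc i) j. c ^ s + (\<Sum>k=j..h. ?extensions k S / (\<beta> * c ^ (k - s))))"
    using assms by (intro sum_mono nbhd_size_power_le_if_bad_Suc) auto
  also have "\<dots> \<le> (\<Sum>S\<in>seqs V j. c ^ s + (\<Sum>k=j..h. ?extensions k S / (\<beta> * c ^ (k - s))))"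
    using finite_seqs[OF simple_graph_finite[OF graph]] beta_pos \<open>0 < c\<close>
    by (intro sum_mono2 add_nonneg_nonneg sum_nonneg) auto
  also have "\<dots> = real (card V) ^ j * c ^ s + (\<Sum>k=j..h. moment (bad i k) j / (\<beta> * c ^ (k - s)))"
    using sum_card_seqs_nbhd_Int[OF graph Diff_subset]
    by (simp add: sum.distrib card_seqs simple_graph_finite[OF graph] sum.swap[of _ "{j..h}"]
        flip: sum_divide_distrib)
  finally show ?thesis .
qed

lemma bad_Suc_moment_le:
  assumes "\<alpha> \<le> \<delta>" and "0 < \<delta>" and "\<delta> \<le> 1" and "1 \<le> s" and "s \<le> j" and "j \<le> h" and "0 \<le> \<eta>"
    and bad_i: "\<And>k. j \<le> k \<Longrightarrow> k \<le> h \<Longrightarrow> moment (bad i k) j \<le> \<eta> * biclique_bound k j"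
  shows "moment (bad (Suc i) j) s \<le> (\<delta> + real (h + 1) * \<eta> / (\<beta> * \<delta> ^ h)) * biclique_bound j s"
proof (cases "p_r r V E = 0")
  case True
  then have "bad (Suc i) j = {}"
    using good_if_p_r_eq_0 \<open>j \<le> h\<close> by (auto simp: goodset_def seqs_def)
  then have "moment (bad (Suc i) j) s = 0"
    by (simp only: sum.empty)
  moreover have "0 \<le> real (h + 1) * \<eta> / (\<beta> * \<delta> ^ h)"
    using beta_pos \<open>0 < \<delta>\<close> \<open>0 \<le> \<eta>\<close> by simp
  ultimately show ?thesis
    using \<open>0 < \<delta>\<close> biclique_bound_nonneg[of j s] by simp
next
  case False
  let ?R = "biclique_bound j s"
  define X where "X = p_r r V E ^ j * real (card V)"
  define c where "c = \<delta> * X"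
  have "0 < p_r r V E"
    using p_r_nonneg[of r V E] False by linarith
  then have "0 < X"
    using card_pos_if_p_r_pos[of r V E] by (simp add: X_def)
  then have "0 < c" and "\<alpha> * X \<le> c"
    using \<open>0 < \<delta>\<close> \<open>\<alpha> \<le> \<delta>\<close> by (simp_all add: c_def mult_right_mono)
  have "real (card V) ^ j * c ^ s = \<delta> ^ s * ?R"
    by (simp add: c_def X_def power_mult_distrib power_add ac_simps flip: power_mult)
  also have "\<dots> \<le> \<delta> * ?R"
    using power_decreasing[OF \<open>1 \<le> s\<close>, of \<delta>] \<open>0 < \<delta>\<close> \<open>\<delta> \<le> 1\<close> biclique_bound_nonneg
    by (simp add: mult_right_mono)
  finally have small_nbhd: "real (card V) ^ j * c ^ s \<le> \<delta> * ?R" .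
  have extension: "moment (bad i k) j / (\<beta> * c ^ (k - s)) \<le> \<eta> / (\<beta> * \<delta> ^ h) * ?R"
    if "k \<in> {j..h}" for k
  proof -
    have "moment (bad i k) j \<le> \<eta> * (X ^ (k - s) * ?R)"
      using bad_i[of k] that biclique_bound_shift[of s k j] \<open>s \<le> j\<close> by (simp add: X_def)
    then have "moment (bad i k) j / (\<beta> * c ^ (k - s)) \<le> \<eta> * (X ^ (k - s) * ?R) / (\<beta> * c ^ (k - s))"
      using beta_pos \<open>0 < c\<close> by (simp add: divide_right_mono)
    also have "\<dots> = \<eta> * ?R / (\<beta> * \<delta> ^ (k - s))"
      using \<open>0 < X\<close> by (simp add: c_def power_mult_distrib)
    also have "\<dots> \<le> \<eta> * ?R / (\<beta> * \<delta> ^ h)"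
      using that \<open>0 < \<delta>\<close> \<open>\<delta> \<le> 1\<close> \<open>0 \<le> \<eta>\<close> beta_pos biclique_bound_nonneg
      by (intro divide_left_mono mult_left_mono power_decreasing) auto
    finally show ?thesis
      by simp
  qed
  have "moment (bad (Suc i) j) s
      \<le> real (card V) ^ j * c ^ s + (\<Sum>k=j..h. moment (bad i k) j / (\<beta> * c ^ (k - s)))"
    using bad_Suc_moment_le_extensions[OF \<open>j \<le> h\<close> \<open>s \<le> j\<close> \<open>0 < c\<close>] \<open>\<alpha> * X \<le> c\<close>
    by (simp add: X_def mult.assoc)
  also have "\<dots> \<le> \<delta> * ?R + (\<Sum>k=j..h. \<eta> / (\<beta> * \<delta> ^ h) * ?R)"
    using small_nbhd sum_mono[OF extension] by (rule add_mono)
  also have "\<dots> \<le> \<delta> * ?R + real (h + 1) * (\<eta> / (\<beta> * \<delta> ^ h) * ?R)"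
  proof -
    have "0 \<le> \<eta> / (\<beta> * \<delta> ^ h) * ?R"
      using \<open>0 \<le> \<eta>\<close> beta_pos \<open>0 < \<delta>\<close> biclique_bound_nonneg by simp
    moreover have "real (card {j..h}) \<le> real (h + 1)"
      by simp
    ultimately show ?thesis
      unfolding sum_constant by (intro add_left_mono mult_right_mono)
  qed
  also have "\<dots> = (\<delta> + real (h + 1) * \<eta> / (\<beta> * \<delta> ^ h)) * ?R"
    by (simp add: algebra_simps)
  finally show ?thesis .
qed

lemma bad_moment_le:
  assumes "\<alpha> \<le> good_threshold \<beta> h i \<eta>" and "0 < \<eta>" and "1 \<le> s" and "s \<le> j" and "j \<le> h"
  shows "moment (bad i j) s \<le> \<eta> * biclique_bound j s"
  using assms
proof (induction i arbitrary: \<eta> s j)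
  case 0
  then have "\<alpha> \<le> \<eta>"
    by simp
  then show ?case
    using bad_0_moment_le[OF \<open>1 \<le> s\<close>, of j] biclique_bound_nonneg[of j s]
    by (meson mult_right_mono order_trans)
next
  case (Suc i)
  define \<delta> where "\<delta> = min (\<eta> / 2) 1"
  define \<eta>' where "\<eta>' = \<eta> * \<beta> * \<delta> ^ h / (2 * real (h + 1))"
  have "0 < \<delta>" and "\<delta> \<le> 1" and "\<delta> \<le> \<eta> / 2"
    using \<open>0 < \<eta>\<close> by (auto simp: \<delta>_def)
  have "0 < \<eta>'"
    using \<open>0 < \<eta>\<close> \<open>0 < \<delta>\<close> beta_pos by (simp add: \<eta>'_def)
  have "\<alpha> \<le> \<delta>" and "\<alpha> \<le> good_threshold \<beta> h i \<eta>'"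
    using Suc.prems(1) by (simp_all add: \<delta>_def \<eta>'_def Let_def)
  have "moment (bad (Suc i) j) s \<le> (\<delta> + real (h + 1) * \<eta>' / (\<beta> * \<delta> ^ h)) * biclique_bound j s"
    using Suc.IH[OF \<open>\<alpha> \<le> good_threshold \<beta> h i \<eta>'\<close> \<open>0 < \<eta>'\<close>] Suc.prems \<open>0 < \<eta>'\<close>
    by (intro bad_Suc_moment_le[OF \<open>\<alpha> \<le> \<delta>\<close> \<open>0 < \<delta>\<close> \<open>\<delta> \<le> 1\<close>]) auto
  also have "real (h + 1) * \<eta>' / (\<beta> * \<delta> ^ h) = \<eta> / 2"
  proof -
    have "\<eta>' / (\<beta> * \<delta> ^ h) = \<eta> / (2 * real (h + 1))"
      using \<open>0 < \<delta>\<close> beta_pos by (simp add: \<eta>'_def)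
    moreover have "(1 + real h) \<noteq> 0"
      by linarith
    ultimately show ?thesis
      by (simp add: field_simps)
  qed
  also have "(\<delta> + \<eta> / 2) * biclique_bound j s \<le> \<eta> * biclique_bound j s"
    using \<open>\<delta> \<le> \<eta> / 2\<close> biclique_bound_nonneg by (intro mult_right_mono) auto
  finally show ?case .
qed

lemma good_moment_ge:
  assumes "\<alpha> \<le> good_threshold \<beta> h h \<beta>" and "i \<le> h" and "0 < r" and "r \<le> j" and "j \<le> h"
  shows "(1 - \<beta>) * biclique_bound j r \<le> moment (goodset \<alpha> \<beta> h r V E i j) r"
proof -
  have "biclique_bound j r \<le> moment (seqs V j) r"
    using sum_card_nbhd_power_ge[OF graph] assms by simp
  also have "\<dots> = moment (bad i j) r + moment (goodset \<alpha> \<beta> h r V E i j) r"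
    using finite_seqs[OF simple_graph_finite[OF graph]]
    by (intro sum.subset_diff) (auto simp: goodset_def)
  also have "moment (bad i j) r \<le> moment (bad h j) r"
    using finite_bad \<open>i \<le> h\<close> good_antimono by (intro sum_mono2) (auto simp: goodset_def)
  also have "\<dots> \<le> \<beta> * biclique_bound j r"
    using bad_moment_le[OF assms(1) beta_pos] assms by simp
  finally show ?thesis
    by (simp add: algebra_simps)
qed

lemma exists_good_seq_large_nbhd:
  assumes "\<beta> < 1" and "V \<noteq> {}" and "0 < r" and "j \<le> h"
    and moment: "(1 - \<beta>) * biclique_bound j r \<le> moment (goodset \<alpha> \<beta> h r V E i j) r"
  shows "\<exists>S\<in>goodset \<alpha> \<beta> h r V E i j. (1 - \<beta>) powr (1 / real r) * p_r r V E ^ j * real (card V) \<le> nbhd_size S"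
proof -
  let ?A = "goodset \<alpha> \<beta> h r V E i j"
  define c where "c = (1 - \<beta>) powr (1 / real r) * p_r r V E ^ j * real (card V)"
  have "0 \<le> c"
    by (simp add: c_def p_r_nonneg)
  have finite_A: "finite ?A" and A_subset: "?A \<subseteq> seqs V j"
    using finite_seqs[OF simple_graph_finite[OF graph]] by (auto simp: goodset_def)
  have "?A \<noteq> {}"
  proof (cases "p_r r V E = 0")
    case True
    obtain v where "v \<in> V"
      using assms(2) by blast
    then have "replicate j v \<in> ?A"
      using good_if_p_r_eq_0[OF True] \<open>j \<le> h\<close> by (auto simp: goodset_def seqs_def)
    then show ?thesis
      by blast
  next
    case False
    then have "0 < (1 - \<beta>) * biclique_bound j r"
      using p_r_nonneg[of r V E] card_pos_if_p_r_pos[of r V E] \<open>\<beta> < 1\<close> by simp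
    with moment show ?thesis
      by auto
  qed
  have "real (card ?A) * c ^ r \<le> real (card V) ^ j * c ^ r"
    using card_le_if_subset_seqs[OF simple_graph_finite[OF graph] A_subset] \<open>0 \<le> c\<close>
    by (simp add: mult_right_mono)
  also have "\<dots> = (1 - \<beta>) * biclique_bound j r"
    using powr_inverse_power[of "1 - \<beta>" r] assms(1,3)
    by (simp add: c_def power_mult_distrib power_add ac_simps flip: power_mult)
  finally obtain S where "S \<in> ?A" and "c ^ r \<le> nbhd_size S ^ r"
    using exists_ge_of_card_mult_le_sum[OF finite_A \<open>?A \<noteq> {}\<close>] moment by (meson order_trans)
  then show ?thesis
    using \<open>0 \<le> c\<close> \<open>0 < r\<close> by (auto simp: c_def power_mono_iff)
qed

end

theorem theorem3p2:
  fixes h r :: nat and \<beta> :: real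
  assumes "1 \<le> r" and "r \<le> h" and "0 < \<beta>" and "\<beta> < 1"
  shows "\<exists>\<alpha>::real. 0 < \<alpha> \<and> \<alpha> < 1 \<and>
    (\<forall>(V::'a set) E. simple_graph V E \<longrightarrow>
      (\<forall>i \<in> {1..h}. \<forall>j \<in> {r..h}.
         (\<Sum>S\<in>goodset \<alpha> \<beta> h r V E i j. real (card (nbhd V E S)) ^ r)
           \<ge> (1 - \<beta>) * real (card V) ^ (j + r) * p_r r V E ^ (j * r)
         \<and> (V \<noteq> {} \<longrightarrow> (\<exists>S \<in> goodset \<alpha> \<beta> h r V E i j.
              real (card (nbhd V E S)) \<ge> (1 - \<beta>) powr (1 / real r) * p_r r V E ^ j * real (card V)))))"
proof -
  define \<alpha> where "\<alpha> = good_threshold \<beta> h h \<beta>"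
  have "0 < \<alpha>" and "\<alpha> \<le> min \<beta> 1"
    using assms good_threshold_pos good_threshold_le by (simp_all add: \<alpha>_def)
  show ?thesis
  proof (intro exI[of _ \<alpha>] conjI allI impI ballI)
    show "0 < \<alpha>" and "\<alpha> < 1"
      using \<open>0 < \<alpha>\<close> \<open>\<alpha> \<le> min \<beta> 1\<close> \<open>\<beta> < 1\<close> by auto
  next
    fix V :: "'a set" and E i j
    assume "simple_graph V E" and i: "i \<in> {1..h}" and j: "j \<in> {r..h}"
    then interpret good_sequences V E \<alpha> \<beta> h r
      using \<open>0 < \<alpha>\<close> \<open>\<alpha> \<le> min \<beta> 1\<close> \<open>0 < \<beta>\<close> by unfold_locales auto
    have moment: "(1 - \<beta>) * biclique_bound j r \<le> moment (goodset \<alpha> \<beta> h r V E i j) r"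
      using i j \<open>1 \<le> r\<close> by (intro good_moment_ge) (auto simp: \<alpha>_def)
    then show "(1 - \<beta>) * real (card V) ^ (j + r) * p_r r V E ^ (j * r) \<le> moment (goodset \<alpha> \<beta> h r V E i j) r"
      by (simp add: mult.assoc)
    assume "V \<noteq> {}"
    then show "\<exists>S\<in>goodset \<alpha> \<beta> h r V E i j.
        (1 - \<beta>) powr (1 / real r) * p_r r V E ^ j * real (card V) \<le> nbhd_size S"
      using exists_good_seq_large_nbhd[OF \<open>\<beta> < 1\<close> _ _ _ moment] j \<open>1 \<le> r\<close> by simp
  qed
qed

end
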